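(* Suppose $\{0,1\}^\ell$ admits a code decomposition with chain of parameters $(\ell,k_0,d_0)-(\ell,k_1,d_1)-\dots-(\ell,k_{m-1},d_{m-1})$, and set $k_m=0$. Then there exists a kernel $g$ of dimension $\ell$ with $E(g)\ge\frac1\ell\sum_{j=0}^{m-1}(k_j-k_{j+1})\log_\ell d_j$.
   Context: A code decomposition of $\{0,1\}^\ell$ with chain of parameters $(\ell,k_0,d_0)-(\ell,k_1,d_1)-\dots-(\ell,k_{m-1},d_{m-1})$ (integers $\ell=k_0>k_1>\dots>k_{m-1}\ge0$) is a family of nested partitions: level $0$ consists of the single set $\{0,1\}^\ell$, and for $j=1,\dots,m-1$ each set of level $j-1$ is partitioned into equally sized sets forming level $j$; every set at level $j$ has exactly $2^{k_j}$ elements and minimum Hamming distance at least $d_j$ between distinct elements. A kernel of dimension $\ell$ is a bijection $g:\{0,1\}^\ell\to\{0,1\}^\ell$; ${\bf a}\bullet{\bf b}$ denotes concatenation, $d_H$ Hamming distance; partial distances $D_{min}^{(i)}=\min\{d_H(g({\bf w}\bullet 0\bullet{\bf u}),g({\bf w}\bullet 1\bullet {\bf v})) : {\bf w}\in\{0,1\}^i,\ {\bf u},{\bf v}\in\{0,1\}^{\ell-i-1}\}$; exponent $E(g)=\frac1\ell\sum_{i=0}^{\ell-1}\log_\ell D_{min}^{(i)}$. *)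

theory Defs
  imports "HOL-Analysis.Analysis" "HOL-Library.Disjoint_Sets"
begin

definition bvecs :: "nat \<Rightarrow> bool list set" where
  "bvecs l = {xs. length xs = l}"

definition hamming :: "bool list \<Rightarrow> bool list \<Rightarrow> nat" where
  "hamming xs ys = card {i. i < length xs \<and> xs ! i \<noteq> ys ! i}"

definition kernel :: "nat \<Rightarrow> (bool list \<Rightarrow> bool list) \<Rightarrow> bool" where
  "kernel l g \<longleftrightarrow> bij_betw g (bvecs l) (bvecs l)"

definition partial_distance :: "nat \<Rightarrow> (bool list \<Rightarrow> bool list) \<Rightarrow> nat \<Rightarrow> nat" where
  "partial_distance l g i = Min {hamming (g (w @ [False] @ u)) (g (w @ [True] @ v)) | w u v.
       w \<in> bvecs i \<and> u \<in> bvecs (l - i - 1) \<and> v \<in> bvecs (l - i - 1)}"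

definition exponent :: "nat \<Rightarrow> (bool list \<Rightarrow> bool list) \<Rightarrow> real" where
  "exponent l g = (1 / real l) * (\<Sum>i<l. log (real l) (real (partial_distance l g i)))"

text \<open>Code decomposition with chain of parameters (l,k_0,d_0)-...-(l,k_{m-1},d_{m-1});
  P j is the family of sets at level j.\<close>
definition code_decomposition ::
  "nat \<Rightarrow> nat \<Rightarrow> (nat \<Rightarrow> nat) \<Rightarrow> (nat \<Rightarrow> nat) \<Rightarrow> (nat \<Rightarrow> bool list set set) \<Rightarrow> bool" where
  "code_decomposition l m k d P \<longleftrightarrow>
     m \<ge> 1 \<and> k 0 = l \<and> (\<forall>j. j + 1 < m \<longrightarrow> k (j + 1) < k j) \<and>
     P 0 = {bvecs l} \<and>
     (\<forall>j. 1 \<le> j \<and> j < m \<longrightarrow>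
        (\<forall>S \<in> P (j - 1). partition_on S {T \<in> P j. T \<subseteq> S}) \<and>
        (\<forall>T \<in> P j. \<exists>S \<in> P (j - 1). T \<subseteq> S)) \<and>
     (\<forall>j < m. \<forall>T \<in> P j. card T = 2 ^ k j \<and>
        (\<forall>x\<in>T. \<forall>y\<in>T. x \<noteq> y \<longrightarrow> d j \<le> hamming x y))"

end

theory Submission
  imports Defs
begin

text \<open>
  A code decomposition is a tree of nested codes; we read an input vector of
  length l as a path through this tree.  At level j the next k_j - k_{j+1} input bits select
  one of the 2^(k_j - k_{j+1}) children of the current set, and at the last level the
  remaining k_{m-1} bits select an element of the leaf set.  The resulting kernel g is a
  bijection, and any two inputs with a common prefix of length l - k_j are sent into a
  common set of level j.  Two inputs that first differ at position i, with
  l - k_j \<le> i < l - k_{j+1}, therefore have images at distance at least d_j, so the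
  partial distance at every such i is at least d_j.  Summing over the blocks of positions
  of sizes k_j - k_{j+1} gives the bound on the exponent.
\<close>

section \<open>Binary vectors and Hamming distance\<close>

lemma finite_bvecs: "finite (bvecs n)"
  using finite_lists_length_eq[of "UNIV :: bool set" n] by (simp add: bvecs_def)

lemma card_bvecs: "card (bvecs n) = 2 ^ n"
  using card_lists_length_eq[of "UNIV :: bool set" n] by (simp add: bvecs_def)

lemma append_in_bvecs: "p \<in> bvecs a \<Longrightarrow> q \<in> bvecs b \<Longrightarrow> p @ q \<in> bvecs (a + b)"
  by (simp add: bvecs_def)

lemma take_drop_in_bvecs:
  "xs \<in> bvecs (a + b) \<Longrightarrow> take a xs \<in> bvecs a \<and> drop a xs \<in> bvecs b"
  by (simp add: bvecs_def)

lemma hamming_pos: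
  assumes "length x = length y" and "x \<noteq> y"
  shows "1 \<le> hamming x y"
proof -
  obtain i where "i < length x" and "x ! i \<noteq> y ! i"
    using assms nth_equalityI by blast
  then have "{i. i < length x \<and> x ! i \<noteq> y ! i} \<noteq> {}" by blast
  then show ?thesis by (simp add: hamming_def Suc_le_eq card_gt_0_iff)
qed

definition enum :: "nat \<Rightarrow> 'a set \<Rightarrow> bool list \<Rightarrow> 'a" where
  "enum n A = (SOME f. bij_betw f (bvecs n) A)"

lemma bij_enum:
  assumes "finite A" and "card A = 2 ^ n"
  shows "bij_betw (enum n A) (bvecs n) A"
proof -
  have "\<exists>f. bij_betw f (bvecs n) A"
    using finite_same_card_bij[OF finite_bvecs assms(1)] assms(2) by (simp add: card_bvecs)
  then show ?thesis unfolding enum_def by (rule someI_ex)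
qed

lemma bij_betw_concat_partition:
  assumes c: "bij_betw c (bvecs a) C" and S: "partition_on S C"
    and h: "\<And>T. T \<in> C \<Longrightarrow> bij_betw (h T) (bvecs b) T"
  shows "bij_betw (\<lambda>xs. h (c (take a xs)) (drop a xs)) (bvecs (a + b)) S"
proof (rule bij_betw_imageI)
  let ?F = "\<lambda>xs. h (c (take a xs)) (drop a xs)"
  have in_block: "c (take a xs) \<in> C \<and> ?F xs \<in> c (take a xs)" if "xs \<in> bvecs (a + b)" for xs
    using take_drop_in_bvecs[OF that] c h bij_betwE by metis
  show "inj_on ?F (bvecs (a + b))"
  proof (rule inj_onI)
    fix xs ys assume xs: "xs \<in> bvecs (a + b)" and ys: "ys \<in> bvecs (a + b)" and eq: "?F xs = ?F ys"
    have "c (take a xs) = c (take a ys)"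
      using in_block[OF xs] in_block[OF ys] eq partition_onD2[OF S]
      by (metis disjointD disjoint_iff)
    then have take_eq: "take a xs = take a ys"
      using c take_drop_in_bvecs[OF xs] take_drop_in_bvecs[OF ys] by (metis bij_betw_iff_bijections)
    then have "drop a xs = drop a ys"
      using h in_block[OF xs] take_drop_in_bvecs[OF xs] take_drop_in_bvecs[OF ys] eq
      by (metis bij_betw_iff_bijections)
    with take_eq show "xs = ys" by (metis append_take_drop_id)
  qed
  show "?F ` bvecs (a + b) = S"
  proof
    show "?F ` bvecs (a + b) \<subseteq> S"
      using in_block partition_onD1[OF S] by blast
  next
    show "S \<subseteq> ?F ` bvecs (a + b)"
    proof
      fix s assume "s \<in> S"
      then obtain T where T: "T \<in> C" "s \<in> T" using partition_onD1[OF S] by blast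
      then obtain p where p: "p \<in> bvecs a" "c p = T" using c by (metis bij_betw_def imageE)
      obtain q where q: "q \<in> bvecs b" "h T q = s" using h[OF T(1)] T(2) by (metis bij_betw_def imageE)
      have "length p = a" using p(1) by (simp add: bvecs_def)
      then have "?F (p @ q) = s" using p q by simp
      then show "s \<in> ?F ` bvecs (a + b)" using append_in_bvecs[OF p(1) q(1)] by blast
    qed
  qed
qed

section \<open>Partial distances, logarithms and block sums\<close>

lemma partial_distance_ge:
  assumes "\<And>w u v. w \<in> bvecs i \<Longrightarrow> u \<in> bvecs (l - i - 1) \<Longrightarrow> v \<in> bvecs (l - i - 1) \<Longrightarrow>
    D \<le> hamming (g (w @ [False] @ u)) (g (w @ [True] @ v))"
  shows "D \<le> partial_distance l g i"
proof -
  let ?M = "{hamming (g (w @ [False] @ u)) (g (w @ [True] @ v)) | w u v.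
       w \<in> bvecs i \<and> u \<in> bvecs (l - i - 1) \<and> v \<in> bvecs (l - i - 1)}"
  have "?M = (\<lambda>(w, u, v). hamming (g (w @ [False] @ u)) (g (w @ [True] @ v))) `
      (bvecs i \<times> bvecs (l - i - 1) \<times> bvecs (l - i - 1))"
    by force
  then have "finite ?M" by (simp add: finite_bvecs)
  moreover have "?M \<noteq> {}"
  proof -
    have "replicate i False \<in> bvecs i" "replicate (l - i - 1) False \<in> bvecs (l - i - 1)"
      by (simp_all add: bvecs_def)
    then show ?thesis by blast
  qed
  ultimately show ?thesis
    unfolding partial_distance_def using assms by (auto simp: Min_ge_iff)
qed

text \<open>Monotonicity of the logarithm to a natural base on natural arguments; a zero
  argument is allowed on the left since log 0 = 0, and for bases at most 1 both sides vanish.\<close>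
lemma log_nat_mono:
  fixes l x y :: nat
  assumes "x \<le> y" and "1 \<le> y"
  shows "log (real l) (real x) \<le> log (real l) (real y)"
proof (cases "1 < l")
  case True
  show ?thesis
  proof (cases "x = 0")
    case True
    then show ?thesis using \<open>1 < l\<close> assms(2) by (simp add: log_def)
  next
    case False
    then show ?thesis using \<open>1 < l\<close> assms(1) by simp
  qed
next
  case False
  then have "l = 0 \<or> l = 1" by auto
  then show ?thesis by (auto simp: log_def)
qed

lemma sum_blocks:
  fixes c :: "nat \<Rightarrow> nat"
  assumes "mono c" and "c 0 = 0"
  shows "(\<Sum>i<c n. f i) = (\<Sum>j<n. \<Sum>i\<in>{c j..<c (Suc j)}. f i)"
proof (induction n)
  case 0 then show ?case using assms(2) by simp
next
  case (Suc n)
  have "c n \<le> c (Suc n)" using assms(1) by (simp add: monoD)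
  then have "(\<Sum>i<c (Suc n). f i) = (\<Sum>i<c n. f i) + (\<Sum>i\<in>{c n..<c (Suc n)}. f i)"
    by (simp add: sum.atLeastLessThan_concat atLeast0LessThan[symmetric])
  then show ?case using Suc by simp
qed

section \<open>The kernel built from a code decomposition\<close>

locale code_decomp =
  fixes l m :: nat and k d :: "nat \<Rightarrow> nat" and P :: "nat \<Rightarrow> bool list set set"
  assumes decomp: "code_decomposition l m k d P"
begin

lemma m_pos: "1 \<le> m"
  and k_0: "k 0 = l"
  and k_dec: "j + 1 < m \<Longrightarrow> k (j + 1) < k j"
  and P_0: "P 0 = {bvecs l}"
  and refines: "j + 1 < m \<Longrightarrow> S \<in> P j \<Longrightarrow> partition_on S {T \<in> P (j + 1). T \<subseteq> S}"
  and has_parent: "j + 1 < m \<Longrightarrow> T \<in> P (j + 1) \<Longrightarrow> \<exists>S \<in> P j. T \<subseteq> S"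
  and card_P: "j < m \<Longrightarrow> T \<in> P j \<Longrightarrow> card T = 2 ^ k j"
  and dist_P: "j < m \<Longrightarrow> T \<in> P j \<Longrightarrow> x \<in> T \<Longrightarrow> y \<in> T \<Longrightarrow> x \<noteq> y \<Longrightarrow> d j \<le> hamming x y"
  using decomp unfolding code_decomposition_def
  by (auto dest: spec[of _ "j + 1"])

lemma k_antimono: "j \<le> j' \<Longrightarrow> j' < m \<Longrightarrow> k j' \<le> k j"
proof (induction j' rule: dec_induct)
  case base then show ?case by simp
next
  case (step n) then show ?case using k_dec[of n] by simp
qed

lemma P_subset_bvecs: "j < m \<Longrightarrow> T \<in> P j \<Longrightarrow> T \<subseteq> bvecs l"
proof (induction j arbitrary: T)
  case 0 then show ?case using P_0 by simp
next
  case (Suc j)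
  then obtain S where "S \<in> P j" "T \<subseteq> S" using has_parent[of j T] by auto
  then show ?case using Suc by auto
qed

lemma finite_P: "j < m \<Longrightarrow> T \<in> P j \<Longrightarrow> finite T"
  using P_subset_bvecs finite_bvecs finite_subset by blast

definition children :: "nat \<Rightarrow> bool list set \<Rightarrow> bool list set set" where
  "children j S = {T \<in> P (j + 1). T \<subseteq> S}"

lemma children_partition: "j + 1 < m \<Longrightarrow> S \<in> P j \<Longrightarrow> partition_on S (children j S)"
  unfolding children_def by (rule refines)

lemma card_children:
  assumes j: "j + 1 < m" and S: "S \<in> P j"
  shows "finite (children j S)" and "card (children j S) = 2 ^ (k j - k (j + 1))"
proof -
  have partition: "partition_on S (children j S)" by (rule children_partition[OF j S])
  have "j < m" using j by simp
  then show "finite (children j S)" using finite_elements[OF finite_P[OF _ S] partition] by simp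
  have card_child: "card T = 2 ^ k (j + 1)" if "T \<in> children j S" for T
    using that card_P[OF j] by (simp add: children_def)
  have "2 ^ k j = card (\<Union>(children j S))"
    using partition_onD1[OF partition] card_P[OF _ S] j by simp
  also have "\<dots> = card (children j S) * 2 ^ k (j + 1)"
    using card_Union_disjoint[OF partition_onD2[OF partition]] card_child finite_P[OF j] j
    by (simp add: children_def)
  finally have "2 ^ (k j - k (j + 1)) * 2 ^ k (j + 1) = card (children j S) * (2::nat) ^ k (j + 1)"
    using k_dec[OF j] by (simp flip: power_add)
  then show "card (children j S) = 2 ^ (k j - k (j + 1))" by simp
qed

function G :: "nat \<Rightarrow> bool list set \<Rightarrow> bool list \<Rightarrow> bool list" where
  "G j S xs = (if j + 1 < m
     then G (j + 1) (enum (k j - k (j + 1)) (children j S) (take (k j - k (j + 1)) xs))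
            (drop (k j - k (j + 1)) xs)
     else enum (k j) S xs)"
  by pat_completeness auto
termination by (relation "Wellfounded.measure (\<lambda>(j, _, _). m - j)") auto

declare G.simps[simp del]

lemma G_step: "j + 1 < m \<Longrightarrow> G j S xs =
    G (j + 1) (enum (k j - k (j + 1)) (children j S) (take (k j - k (j + 1)) xs)) (drop (k j - k (j + 1)) xs)"
  by (simp add: G.simps)

lemma G_last: "\<not> j + 1 < m \<Longrightarrow> G j S = enum (k j) S"
  by (simp add: G.simps[abs_def])

lemma bij_enum_children:
  "j + 1 < m \<Longrightarrow> S \<in> P j \<Longrightarrow>
    bij_betw (enum (k j - k (j + 1)) (children j S)) (bvecs (k j - k (j + 1))) (children j S)"
  using bij_enum card_children by blast

lemma enum_children_in_P:
  "j + 1 < m \<Longrightarrow> S \<in> P j \<Longrightarrow> p \<in> bvecs (k j - k (j + 1)) \<Longrightarrow>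
    enum (k j - k (j + 1)) (children j S) p \<in> P (j + 1)"
  using bij_enum_children bij_betwE by (fastforce simp: children_def)

lemma G_bij: "j < m \<Longrightarrow> S \<in> P j \<Longrightarrow> bij_betw (G j S) (bvecs (k j)) S"
proof (induction "m - j" arbitrary: j S)
  case 0 then show ?case by simp
next
  case (Suc n)
  show ?case
  proof (cases "j + 1 < m")
    case False
    then show ?thesis using G_last bij_enum finite_P card_P Suc.prems by metis
  next
    case True
    have IH: "bij_betw (G (j + 1) T) (bvecs (k (j + 1))) T" if "T \<in> children j S" for T
      using Suc True that by (intro Suc.hyps) (auto simp: children_def)
    have "bij_betw (\<lambda>xs. G (j + 1) (enum (k j - k (j + 1)) (children j S) (take (k j - k (j + 1)) xs))
        (drop (k j - k (j + 1)) xs)) (bvecs (k j - k (j + 1) + k (j + 1))) S"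
      by (rule bij_betw_concat_partition[OF bij_enum_children[OF True Suc.prems(2)]
            children_partition[OF True Suc.prems(2)] IH])
    moreover have "G j S = (\<lambda>xs. G (j + 1) (enum (k j - k (j + 1)) (children j S)
        (take (k j - k (j + 1)) xs)) (drop (k j - k (j + 1)) xs))"
      by (intro ext G_step[OF True])
    ultimately show ?thesis using k_dec[OF True] by simp
  qed
qed

lemma G_prefix:
  "j \<le> j' \<Longrightarrow> j' < m \<Longrightarrow> S \<in> P j \<Longrightarrow> p \<in> bvecs (k j - k j') \<Longrightarrow>
    \<exists>T \<in> P j'. \<forall>q \<in> bvecs (k j'). G j S (p @ q) \<in> T"
proof (induction "j' - j" arbitrary: j S p)
  case 0
  then have "j = j'" and "p = []" by (auto simp: bvecs_def)
  then show ?case using G_bij[OF _ 0(4)] 0 bij_betwE by fastforce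
next
  case (Suc n)
  then have step: "j + 1 < m" and "j + 1 \<le> j'" by auto
  define a where "a = k j - k (j + 1)"
  define T where "T = enum a (children j S) (take a p)"
  have len: "length p = a + (k (j + 1) - k j')"
    using Suc.prems(4) k_dec[OF step] k_antimono[OF \<open>j + 1 \<le> j'\<close> Suc.prems(2)]
    by (simp add: bvecs_def a_def)
  have T: "T \<in> P (j + 1)"
    unfolding T_def a_def using enum_children_in_P[OF step Suc.prems(3)] len
    by (simp add: bvecs_def a_def)
  have "drop a p \<in> bvecs (k (j + 1) - k j')" using len by (simp add: bvecs_def)
  then obtain U where U: "U \<in> P j'" "\<forall>q \<in> bvecs (k j'). G (j + 1) T (drop a p @ q) \<in> U"
    using Suc.hyps(1)[of "j + 1" T] Suc.hyps(2) \<open>j + 1 \<le> j'\<close> Suc.prems(2) T by fastforce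
  have "G j S (p @ q) = G (j + 1) T (drop a p @ q)" for q
    using G_step[OF step] len by (simp add: T_def a_def)
  then show ?case using U by auto
qed

definition g :: "bool list \<Rightarrow> bool list" where
  "g = G 0 (bvecs l)"

lemma kernel_g: "kernel l g"
  using G_bij[of 0 "bvecs l"] m_pos P_0 k_0 by (simp add: kernel_def g_def)

lemma g_common_prefix:
  assumes j: "j < m" and x: "x \<in> bvecs l" and y: "y \<in> bvecs l"
    and prefix: "take (l - k j) x = take (l - k j) y"
  shows "\<exists>T \<in> P j. g x \<in> T \<and> g y \<in> T"
proof -
  have kj: "k j \<le> l" using k_antimono[of 0 j] j k_0 by simp
  have "take (l - k j) x \<in> bvecs (k 0 - k j)" using x kj k_0 by (simp add: bvecs_def)
  moreover have "bvecs l \<in> P 0" using P_0 by simp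
  ultimately obtain T where T: "T \<in> P j" "\<forall>q \<in> bvecs (k j). G 0 (bvecs l) (take (l - k j) x @ q) \<in> T"
    using G_prefix[OF _ j] by blast
  have "drop (l - k j) x \<in> bvecs (k j)" "drop (l - k j) y \<in> bvecs (k j)"
    using x y kj by (simp_all add: bvecs_def)
  then show ?thesis
    using T prefix unfolding g_def by (metis append_take_drop_id)
qed

text \<open>The dimensions extended by k_m = 0, and the block of positions i with
  l - k_j \<le> i < l - k_{j+1}; the blocks j < m partition the positions 0, ..., l - 1.\<close>
definition kext :: "nat \<Rightarrow> nat" where
  "kext j = (if j < m then k j else 0)"

definition block :: "nat \<Rightarrow> nat set" where
  "block j = {l - kext j..<l - kext (Suc j)}"

lemma kext_Suc_le: "kext (Suc j) \<le> kext j"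
  using k_dec[of j] by (auto simp: kext_def)

text \<open>Block j contains k_j - k_{j+1} positions, the weight of d_j in the claimed bound.\<close>
lemma card_block:
  assumes "j < m"
  shows "real (card (block j)) = real (k j) - real (if j + 1 < m then k (j + 1) else 0)"
proof -
  have "kext (Suc j) \<le> k j" "k j \<le> l" "kext j = k j"
    using kext_Suc_le[of j] k_antimono[of 0 j] k_0 assms by (auto simp: kext_def)
  then show ?thesis by (simp add: block_def kext_def of_nat_diff)
qed

lemma sum_over_blocks: "(\<Sum>i<l. f i) = (\<Sum>j<m. \<Sum>i\<in>block j. f i)"
proof -
  have "mono (\<lambda>j. l - kext j)"
    by (rule mono_iff_le_Suc[THEN iffD2]) (simp add: diff_le_mono2 kext_Suc_le)
  moreover have "l - kext 0 = 0" using m_pos k_0 by (simp add: kext_def)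
  ultimately have "(\<Sum>i<l - kext m. f i) = (\<Sum>j<m. \<Sum>i\<in>block j. f i)"
    unfolding block_def by (rule sum_blocks)
  then show ?thesis by (simp add: kext_def)
qed

text \<open>Main estimate: two inputs first differing at a position of block j share their
  prefix of length l - k_j, so their images lie in a common code of level j.\<close>
lemma partial_distance_block:
  assumes j: "j < m" and i: "i \<in> block j"
  shows "max 1 (d j) \<le> partial_distance l g i"
proof (rule partial_distance_ge)
  fix w u v
  assume w: "w \<in> bvecs i" and u: "u \<in> bvecs (l - i - 1)" and v: "v \<in> bvecs (l - i - 1)"
  define x where "x = w @ [False] @ u"
  define y where "y = w @ [True] @ v"
  have i_bounds: "l - k j \<le> i" "i < l" and len_w: "length w = i"
    using i j w by (auto simp: block_def kext_def bvecs_def)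
  have x: "x \<in> bvecs l" and y: "y \<in> bvecs l"
    using len_w u v i_bounds by (auto simp: bvecs_def x_def y_def)
  have "x ! i \<noteq> y ! i" using len_w by (simp add: x_def y_def nth_append)
  then have "g x \<noteq> g y" using x y kernel_g unfolding kernel_def bij_betw_def inj_on_def by blast
  moreover have "take (l - k j) x = take (l - k j) y"
    using i_bounds len_w by (simp add: x_def y_def)
  then obtain T where "T \<in> P j" "g x \<in> T" "g y \<in> T" using g_common_prefix[OF j x y] by blast
  moreover have "length (g x) = length (g y)"
    using x y kernel_g bij_betwE unfolding kernel_def bvecs_def by fastforce
  ultimately have "d j \<le> hamming (g x) (g y)" "1 \<le> hamming (g x) (g y)"
    using dist_P[OF j] hamming_pos by simp_all
  then show "max 1 (d j) \<le> hamming (g (w @ [False] @ u)) (g (w @ [True] @ v))"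
    by (simp add: x_def y_def)
qed

end


theorem corollary1:
  fixes l m :: nat and k d :: "nat \<Rightarrow> nat" and P :: "nat \<Rightarrow> bool list set set"
  assumes "code_decomposition l m k d P"
  shows "\<exists>g. kernel l g \<and>
    exponent l g \<ge> (1 / real l) *
      (\<Sum>j<m. (real (k j) - real (if j + 1 < m then k (j + 1) else 0)) * log (real l) (real (d j)))"
proof -
  interpret code_decomp l m k d P using assms by unfold_locales
  let ?PD = "\<lambda>i. log (real l) (real (partial_distance l g i))"
  have "(\<Sum>j<m. (real (k j) - real (if j + 1 < m then k (j + 1) else 0)) * log (real l) (real (d j)))
      = (\<Sum>j<m. \<Sum>i\<in>block j. log (real l) (real (d j)))"
    by (simp add: card_block)
  also have "\<dots> \<le> (\<Sum>j<m. \<Sum>i\<in>block j. ?PD i)"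
  proof (intro sum_mono)
    fix j i assume "j \<in> {..<m}" and "i \<in> block j"
    then have "max 1 (d j) \<le> partial_distance l g i" using partial_distance_block by blast
    then show "log (real l) (real (d j)) \<le> ?PD i" by (simp add: log_nat_mono)
  qed
  also have "\<dots> = (\<Sum>i<l. ?PD i)"
    by (rule sum_over_blocks[symmetric])
  finally have "(1 / real l) *
      (\<Sum>j<m. (real (k j) - real (if j + 1 < m then k (j + 1) else 0)) * log (real l) (real (d j)))
      \<le> exponent l g"
    unfolding exponent_def by (intro mult_left_mono) simp_all
  then show ?thesis using kernel_g by blast
qed

end
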